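(* The edge set of the complete graph $K_9$ cannot be partitioned into three subgraphs each isomorphic to $P_3 \square P_3$.
   Context: $P_n$ denotes the path graph on $n$ vertices and $K_m$ the complete graph on $m$ vertices. For graphs $G=(V,E)$ and $G'=(V',E')$, the Cartesian product $G \square G'$ has vertex set $V\times V'$, with $\{(v,v'),(w,w')\}$ an edge iff either $\{v,w\}\in E$ and $v'=w'$, or $v=w$ and $\{v',w'\}\in E'$. Thus $P_3\square P_3$ is the $3\times 3$ grid graph with 9 vertices and 12 edges. *)

theory Defs
  imports Main
begin

type_synonym 'a graph = "'a set \<times> 'a set set"

definition is_graph :: "'a graph \<Rightarrow> bool" where
  "is_graph G \<longleftrightarrow> finite (fst G) \<and> (\<forall>e\<in>snd G. e \<subseteq> fst G \<and> card e = 2)"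

definition path_graph :: "nat \<Rightarrow> nat graph" where
  "path_graph n = ({0..<n}, {{i, i+1} | i. i + 1 < n})"

definition complete_graph :: "nat \<Rightarrow> nat graph" where
  "complete_graph m = ({0..<m}, {{i, j} | i j. i < m \<and> j < m \<and> i \<noteq> j})"

definition cart_prod :: "'a graph \<Rightarrow> 'b graph \<Rightarrow> ('a \<times> 'b) graph" where
  "cart_prod G H = (fst G \<times> fst H,
     {{(v, v'), (w, w')} | v v' w w'.
        v \<in> fst G \<and> w \<in> fst G \<and> v' \<in> fst H \<and> w' \<in> fst H \<and>
        (({v, w} \<in> snd G \<and> v' = w') \<or> (v = w \<and> {v', w'} \<in> snd H))})"

definition graph_iso :: "'a graph \<Rightarrow> 'b graph \<Rightarrow> bool" where
  "graph_iso G H \<longleftrightarrow> (\<exists>f. bij_betw f (fst G) (fst H) \<and>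
     (\<forall>u\<in>fst G. \<forall>v\<in>fst G. {u, v} \<in> snd G \<longleftrightarrow> {f u, f v} \<in> snd H))"

definition subgraph :: "'a graph \<Rightarrow> 'a graph \<Rightarrow> bool" where
  "subgraph H G \<longleftrightarrow> is_graph H \<and> fst H \<subseteq> fst G \<and> snd H \<subseteq> snd G"

end

theory Submission
  imports Defs
begin

text \<open>Degrees in the grid \<open>P\<^sub>3 \<box> P\<^sub>3\<close> are 4 at the centre, 3 at the four edge midpoints
  and 2 at the corners, and every edge joins a midpoint to the centre or to a corner.
  Since every vertex of \<open>K\<^sub>9\<close> has degree 8 and every grid has minimum degree 2, at the centre
  of one copy the other two copies have degree 2. So the centres \<open>c\<^sub>2\<close> and \<open>c\<^sub>3\<close> of two
  different copies are distinct and have degree 2 or 4 in each copy; hence the edge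
  \<open>c\<^sub>2c\<^sub>3\<close> of \<open>K\<^sub>9\<close> has no endpoint of degree 3 in any copy and lies in none of them.\<close>

definition neighbours :: "'a graph \<Rightarrow> 'a \<Rightarrow> 'a set" where
  "neighbours G v = {u \<in> fst G. {u, v} \<in> snd G}"

definition degree :: "'a graph \<Rightarrow> 'a \<Rightarrow> nat" where
  "degree G v = card (neighbours G v)"

lemma finite_neighbours: "is_graph G \<Longrightarrow> finite (neighbours G v)"
  unfolding is_graph_def neighbours_def by simp

lemma not_in_neighbours_self: "is_graph G \<Longrightarrow> v \<notin> neighbours G v"
  unfolding is_graph_def neighbours_def by auto

lemma degree_graph_iso:
  assumes f: "bij_betw f (fst G) (fst H)"
    and edges: "\<forall>u\<in>fst G. \<forall>v\<in>fst G. {u, v} \<in> snd G \<longleftrightarrow> {f u, f v} \<in> snd H"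
    and v: "v \<in> fst G"
  shows "degree G v = degree H (f v)"
proof -
  have "neighbours H (f v) = f ` neighbours G v"
  proof
    show "f ` neighbours G v \<subseteq> neighbours H (f v)"
      using edges v bij_betw_apply[OF f] by (auto simp: neighbours_def)
    show "neighbours H (f v) \<subseteq> f ` neighbours G v"
    proof
      fix w assume w: "w \<in> neighbours H (f v)"
      then obtain u where "u \<in> fst G" "w = f u"
        using bij_betw_imp_surj_on[OF f] by (auto simp: neighbours_def)
      with w edges v show "w \<in> f ` neighbours G v" by (auto simp: neighbours_def)
    qed
  qed
  moreover have "inj_on f (neighbours G v)"
    using bij_betw_imp_inj_on[OF f] by (rule inj_on_subset) (auto simp: neighbours_def)
  ultimately show ?thesis by (simp add: degree_def card_image)
qed

lemma subgraph_spanning: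
  assumes "subgraph H G" "finite (fst G)" "card (fst H) = card (fst G)"
  shows "fst H = fst G"
  using assms by (intro card_subset_eq) (auto simp: subgraph_def)

lemma degree_edge_decomposition:
  assumes sub: "subgraph H1 G" "subgraph H2 G" "subgraph H3 G"
    and cover: "snd H1 \<union> snd H2 \<union> snd H3 = snd G"
    and disj: "snd H1 \<inter> snd H2 = {}" "snd H1 \<inter> snd H3 = {}" "snd H2 \<inter> snd H3 = {}"
  shows "degree G v = degree H1 v + degree H2 v + degree H3 v"
proof -
  have graphs: "is_graph H1" "is_graph H2" "is_graph H3"
    using sub by (simp_all add: subgraph_def)
  have endpoint: "u \<in> fst H" if "is_graph H" "{u, v} \<in> snd H" for H :: "'a graph" and u
    using that unfolding is_graph_def by blast
  have "neighbours G v = neighbours H1 v \<union> neighbours H2 v \<union> neighbours H3 v"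
    unfolding neighbours_def using endpoint[OF graphs(1)] endpoint[OF graphs(2)]
      endpoint[OF graphs(3)] sub cover by (auto simp: subgraph_def)
  moreover have "neighbours H1 v \<inter> neighbours H2 v = {}"
    "(neighbours H1 v \<union> neighbours H2 v) \<inter> neighbours H3 v = {}"
    using disj by (auto simp: neighbours_def)
  ultimately show ?thesis
    using graphs by (simp add: degree_def finite_neighbours card_Un_disjoint)
qed

lemma complete_graph_vertices: "fst (complete_graph m) = {0..<m}"
  by (simp add: complete_graph_def)

lemma complete_graph_edge_iff:
  "{u, v} \<in> snd (complete_graph m) \<longleftrightarrow> u < m \<and> v < m \<and> u \<noteq> v"
  by (auto simp: complete_graph_def doubleton_eq_iff)

lemma degree_complete_graph:
  assumes "v < m"
  shows "degree (complete_graph m) v = m - 1"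
proof -
  have "neighbours (complete_graph m) v = {0..<m} - {v}"
    using assms by (auto simp: neighbours_def complete_graph_edge_iff complete_graph_vertices)
  with assms show ?thesis by (simp add: degree_def)
qed

lemma is_graph_path_graph: "is_graph (path_graph n)"
  by (auto simp: is_graph_def path_graph_def)

lemma path_graph_vertices: "fst (path_graph n) = {0..<n}"
  by (simp add: path_graph_def)

lemma path_graph_edge_iff:
  "{i, j} \<in> snd (path_graph n) \<longleftrightarrow> (j = Suc i \<and> j < n) \<or> (i = Suc j \<and> i < n)"
  by (auto simp: path_graph_def doubleton_eq_iff)

lemma degree_path_graph:
  assumes "i < n"
  shows "degree (path_graph n) i = (if 0 < i then 1 else 0) + (if Suc i < n then 1 else 0)"
proof -
  have "neighbours (path_graph n) i =
      (if 0 < i then {i - 1} else {}) \<union> (if Suc i < n then {Suc i} else {})"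
    using assms by (auto simp: neighbours_def path_graph_edge_iff path_graph_vertices)
  then show ?thesis
    by (simp add: degree_def)
qed

lemma cart_prod_edge_iff:
  "{(v, v'), (w, w')} \<in> snd (cart_prod G H) \<longleftrightarrow>
     v \<in> fst G \<and> w \<in> fst G \<and> v' \<in> fst H \<and> w' \<in> fst H \<and>
     (({v, w} \<in> snd G \<and> v' = w') \<or> (v = w \<and> {v', w'} \<in> snd H))"
  unfolding cart_prod_def by (auto simp: doubleton_eq_iff insert_commute)

lemma neighbours_cart_prod:
  assumes "v \<in> fst G" "v' \<in> fst H"
  shows "neighbours (cart_prod G H) (v, v') = neighbours G v \<times> {v'} \<union> {v} \<times> neighbours H v'"
  using assms by (auto simp: neighbours_def cart_prod_edge_iff) (auto simp: cart_prod_def)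

lemma degree_cart_prod:
  assumes "is_graph G" "is_graph H" "v \<in> fst G" "v' \<in> fst H"
  shows "degree (cart_prod G H) (v, v') = degree G v + degree H v'"
proof -
  have "(neighbours G v \<times> {v'}) \<inter> ({v} \<times> neighbours H v') = {}"
    using not_in_neighbours_self[OF assms(1)] by auto
  then show ?thesis
    using assms by (simp add: degree_def neighbours_cart_prod card_Un_disjoint
        finite_neighbours card_cartesian_product)
qed

abbreviation grid :: "(nat \<times> nat) graph" where
  "grid \<equiv> cart_prod (path_graph 3) (path_graph 3)"

lemma grid_vertices: "fst grid = {0..<3} \<times> {0..<3}"
  by (simp add: cart_prod_def path_graph_def)

lemma degree_grid:
  assumes "(i, j) \<in> fst grid"
  shows "degree grid (i, j) = (if i = 1 then 2 else 1) + (if j = 1 then 2 else 1)"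
proof -
  have "i < 3" "j < 3" using assms by (auto simp: grid_vertices)
  then show ?thesis
    using degree_cart_prod[OF is_graph_path_graph is_graph_path_graph, of i 3 j 3]
    by (simp add: degree_path_graph path_graph_vertices)
qed

lemma grid_edge_degree_3:
  assumes "{x, y} \<in> snd grid"
  shows "degree grid x = 3 \<or> degree grid y = 3"
proof -
  obtain a b c d where "x = (a, b)" "y = (c, d)" by fastforce
  with assms show ?thesis
    by (auto simp: cart_prod_edge_iff path_graph_edge_iff path_graph_vertices degree_grid grid_vertices)
qed

lemma card_grid_copy: "graph_iso G grid \<Longrightarrow> card (fst G) = 9"
  by (auto simp: graph_iso_def grid_vertices dest: bij_betw_same_card)

lemma grid_copy_degree_ge_2:
  assumes "graph_iso G grid" "v \<in> fst G"
  shows "degree G v \<ge> 2"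
proof -
  obtain f where f: "bij_betw f (fst G) (fst grid)"
    and edges: "\<forall>x\<in>fst G. \<forall>y\<in>fst G. {x, y} \<in> snd G \<longleftrightarrow> {f x, f y} \<in> snd grid"
    using assms(1) unfolding graph_iso_def by blast
  obtain i j where "f v = (i, j)" "(i, j) \<in> fst grid"
    using bij_betw_apply[OF f assms(2)] by (cases "f v") auto
  with degree_graph_iso[OF f edges assms(2)] show ?thesis
    by (simp add: degree_grid)
qed

lemma grid_copy_centre:
  assumes "graph_iso G grid"
  obtains c where "c \<in> fst G" "degree G c = 4"
proof -
  obtain f where f: "bij_betw f (fst G) (fst grid)"
    and edges: "\<forall>x\<in>fst G. \<forall>y\<in>fst G. {x, y} \<in> snd G \<longleftrightarrow> {f x, f y} \<in> snd grid"
    using assms unfolding graph_iso_def by blast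
  have "(1, 1) \<in> fst grid" by (simp add: grid_vertices)
  then obtain c where "c \<in> fst G" "f c = (1, 1)"
    using bij_betw_imp_surj_on[OF f] by force
  moreover have "degree grid (1, 1) = 4"
    by (simp add: degree_grid grid_vertices)
  ultimately show thesis
    using degree_graph_iso[OF f edges] that by simp
qed

lemma grid_copy_edge_degree_3:
  assumes "graph_iso G grid" "u \<in> fst G" "v \<in> fst G" "{u, v} \<in> snd G"
  shows "degree G u = 3 \<or> degree G v = 3"
proof -
  obtain f where f: "bij_betw f (fst G) (fst grid)"
    and edges: "\<forall>x\<in>fst G. \<forall>y\<in>fst G. {x, y} \<in> snd G \<longleftrightarrow> {f x, f y} \<in> snd grid"
    using assms(1) unfolding graph_iso_def by blast
  with assms(2-4) show ?thesis
    using grid_edge_degree_3[of "f u" "f v"] degree_graph_iso[OF f edges] by auto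
qed

lemma no_three_grids_with_degree_sum_8:
  assumes V: "fst H1 = V" "fst H2 = V" "fst H3 = V"
    and iso: "graph_iso H1 grid" "graph_iso H2 grid" "graph_iso H3 grid"
    and sum: "\<And>v. v \<in> V \<Longrightarrow> degree H1 v + degree H2 v + degree H3 v = 8"
    and cover: "\<And>x y. x \<in> V \<Longrightarrow> y \<in> V \<Longrightarrow> x \<noteq> y \<Longrightarrow> {x, y} \<in> snd H1 \<union> snd H2 \<union> snd H3"
  shows False
proof -
  have min_degree: "degree H1 v \<ge> 2" "degree H2 v \<ge> 2" "degree H3 v \<ge> 2" if "v \<in> V" for v
    using that V iso by (simp_all add: grid_copy_degree_ge_2)
  obtain c2 where c2: "c2 \<in> V" "degree H2 c2 = 4"
    using grid_copy_centre[OF iso(2)] V by metis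
  obtain c3 where c3: "c3 \<in> V" "degree H3 c3 = 4"
    using grid_copy_centre[OF iso(3)] V by metis
  have deg_c2: "degree H1 c2 = 2" "degree H3 c2 = 2"
    using sum[OF c2(1)] min_degree[OF c2(1)] c2(2) by linarith+
  have deg_c3: "degree H1 c3 = 2" "degree H2 c3 = 2"
    using sum[OF c3(1)] min_degree[OF c3(1)] c3(2) by linarith+
  then have "c2 \<noteq> c3" using c2 by auto
  have no_edge: "{c2, c3} \<notin> snd H"
    if "graph_iso H grid" "fst H = V" "degree H c2 \<noteq> 3" "degree H c3 \<noteq> 3" for H
    using grid_copy_edge_degree_3[OF that(1), of c2 c3] that c2 c3 by auto
  show False
    using cover[OF c2(1) c3(1) \<open>c2 \<noteq> c3\<close>] no_edge[OF iso(1) V(1)] no_edge[OF iso(2) V(2)]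
      no_edge[OF iso(3) V(3)] c2 c3 deg_c2 deg_c3 by auto
qed

theorem theorem3:
  shows "\<not> (\<exists>H1 H2 H3 :: nat graph.
            subgraph H1 (complete_graph 9) \<and> subgraph H2 (complete_graph 9) \<and>
            subgraph H3 (complete_graph 9) \<and>
            graph_iso H1 (cart_prod (path_graph 3) (path_graph 3)) \<and>
            graph_iso H2 (cart_prod (path_graph 3) (path_graph 3)) \<and>
            graph_iso H3 (cart_prod (path_graph 3) (path_graph 3)) \<and>
            snd H1 \<union> snd H2 \<union> snd H3 = snd (complete_graph 9) \<and>
            snd H1 \<inter> snd H2 = {} \<and> snd H1 \<inter> snd H3 = {} \<and> snd H2 \<inter> snd H3 = {})"
proof
  assume "\<exists>H1 H2 H3 :: nat graph.
            subgraph H1 (complete_graph 9) \<and> subgraph H2 (complete_graph 9) \<and>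
            subgraph H3 (complete_graph 9) \<and>
            graph_iso H1 grid \<and> graph_iso H2 grid \<and> graph_iso H3 grid \<and>
            snd H1 \<union> snd H2 \<union> snd H3 = snd (complete_graph 9) \<and>
            snd H1 \<inter> snd H2 = {} \<and> snd H1 \<inter> snd H3 = {} \<and> snd H2 \<inter> snd H3 = {}"
  then obtain H1 H2 H3 :: "nat graph" where
    sub: "subgraph H1 (complete_graph 9)" "subgraph H2 (complete_graph 9)"
      "subgraph H3 (complete_graph 9)"
    and iso: "graph_iso H1 grid" "graph_iso H2 grid" "graph_iso H3 grid"
    and cover: "snd H1 \<union> snd H2 \<union> snd H3 = snd (complete_graph 9)"
    and disj: "snd H1 \<inter> snd H2 = {}" "snd H1 \<inter> snd H3 = {}" "snd H2 \<inter> snd H3 = {}"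
    by blast
  have spanning: "fst H = {0..<9}" if "subgraph H (complete_graph 9)" "graph_iso H grid" for H
    using subgraph_spanning[OF that(1)] card_grid_copy[OF that(2)]
    by (simp add: complete_graph_vertices)
  show False
  proof (rule no_three_grids_with_degree_sum_8
      [OF spanning[OF sub(1) iso(1)] spanning[OF sub(2) iso(2)] spanning[OF sub(3) iso(3)] iso])
    show "degree H1 v + degree H2 v + degree H3 v = 8" if "v \<in> {0..<9}" for v
      using that degree_edge_decomposition[OF sub cover disj, of v] by (simp add: degree_complete_graph)
    show "{x, y} \<in> snd H1 \<union> snd H2 \<union> snd H3"
      if "x \<in> {0..<9}" "y \<in> {0..<9}" "x \<noteq> y" for x y
      using that cover by (simp add: complete_graph_edge_iff)
  qed
qed

end
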